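(* Suppose $G$ acts transitively on $S$. Then for every $\sigma$-finite jointly invariant measure $M$ on $S\times S$ and every $B\in\mathcal S$, $$\int\tilde\Delta(s,t)\mathbf 1_B(s)\,M(d(s,t))=\int\mathbf 1_B(t)\,M(d(s,t)),$$ where $\tilde\Delta(s,t)=\Delta(g^{-1})$ for any $g\in G$ with $gs=t$.
   Context: $G$ is a locally compact second countable Hausdorff group with left Haar measure $\lambda$ and modular function $\Delta$ ($\int f(gh)\lambda(dg)=\Delta(h^{-1})\int f\,d\lambda$). $(S,\mathcal S)$ is a Borel space on which $G$ acts measurably and properly (with $\mu_s$ the image of $\lambda$ under $g\mapsto gs$, there is a measurable partition $B_1,B_2,\dots$ of $S$ with $\mu_s(B_n)<\infty$ for all $s,n$); under properness $\Delta(g^{-1})$ does not depend on the choice of $g$ with $gs=t$. Transitive means $Gs=S$ for some (all) $s$. $M$ jointly invariant means $M(\{(gs,gt):(s,t)\in A\})=M(A)$ for all $g$ and measurable $A$. *)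

theory Defs
  imports "HOL-Analysis.Analysis"
begin

text \<open>The group G is the type 'g, written additively (group_add is
  not assumed commutative): g + h is the product gh, -g the inverse g^{-1},
  0 the identity.\<close>

text \<open>Borel space in the sense of Kallenberg: Borel isomorphic to a Borel subset of the reals.\<close>
definition borel_space_meas :: "'s measure \<Rightarrow> bool" where
  "borel_space_meas S \<longleftrightarrow> (\<exists>(f :: 's \<Rightarrow> real) h A. A \<in> sets borel \<and>
      f \<in> measurable S (restrict_space borel A) \<and>
      h \<in> measurable (restrict_space borel A) S \<and>
      (\<forall>x\<in>space S. h (f x) = x) \<and> (\<forall>y\<in>A. f (h y) = y))"

definition left_haar :: "'g::topological_group_add measure \<Rightarrow> bool" where
  "left_haar lam \<longleftrightarrow> sets lam = sets borel \<and>
     (\<forall>g A. A \<in> sets borel \<longrightarrow> emeasure lam ((+) g ` A) = emeasure lam A) \<and>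
     (\<forall>K. compact K \<longrightarrow> emeasure lam K < \<infinity>) \<and>
     (\<forall>U. open U \<and> U \<noteq> {} \<longrightarrow> emeasure lam U > 0)"

definition modular_function :: "'g::topological_group_add measure \<Rightarrow> ('g \<Rightarrow> real) \<Rightarrow> bool" where
  "modular_function lam Delta \<longleftrightarrow> (\<forall>h. Delta h > 0) \<and>
     (\<forall>h (f :: 'g \<Rightarrow> ennreal). f \<in> borel_measurable borel \<longrightarrow>
        (\<integral>\<^sup>+ g. f (g + h) \<partial>lam) = ennreal (Delta (- h)) * (\<integral>\<^sup>+ g. f g \<partial>lam))"

definition measurable_action :: "('g::topological_group_add \<Rightarrow> 's \<Rightarrow> 's) \<Rightarrow> 's measure \<Rightarrow> bool" where
  "measurable_action act S \<longleftrightarrow>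
     (\<lambda>(g, s). act g s) \<in> measurable (borel \<Otimes>\<^sub>M S) S \<and>
     (\<forall>s\<in>space S. act 0 s = s) \<and>
     (\<forall>g h. \<forall>s\<in>space S. act (g + h) s = act g (act h s))"

definition orbit_measure :: "'g measure \<Rightarrow> ('g \<Rightarrow> 's \<Rightarrow> 's) \<Rightarrow> 's measure \<Rightarrow> 's \<Rightarrow> 's measure" where
  "orbit_measure lam act S s = distr lam S (\<lambda>g. act g s)"

definition proper_action :: "'g measure \<Rightarrow> ('g \<Rightarrow> 's \<Rightarrow> 's) \<Rightarrow> 's measure \<Rightarrow> bool" where
  "proper_action lam act S \<longleftrightarrow> (\<exists>B :: nat \<Rightarrow> 's set.
      (\<forall>n. B n \<in> sets S) \<and> disjoint_family B \<and> (\<Union>n. B n) = space S \<and>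
      (\<forall>s\<in>space S. \<forall>n. emeasure (orbit_measure lam act S s) (B n) < \<infinity>))"

definition transitive_action :: "('g \<Rightarrow> 's \<Rightarrow> 's) \<Rightarrow> 's measure \<Rightarrow> bool" where
  "transitive_action act S \<longleftrightarrow> (\<exists>s\<in>space S. \<forall>t\<in>space S. \<exists>g. act g s = t)"

definition jointly_invariant :: "('g \<Rightarrow> 's \<Rightarrow> 's) \<Rightarrow> 's measure \<Rightarrow> ('s \<times> 's) measure \<Rightarrow> bool" where
  "jointly_invariant act S M \<longleftrightarrow> (\<forall>g. \<forall>A\<in>sets (S \<Otimes>\<^sub>M S).
      emeasure M ((\<lambda>(s, t). (act g s, act g t)) ` A) = emeasure M A)"

definition Delta_tilde :: "('g::group_add \<Rightarrow> real) \<Rightarrow> ('g \<Rightarrow> 's \<Rightarrow> 's) \<Rightarrow> 's \<Rightarrow> 's \<Rightarrow> real" where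
  "Delta_tilde Delta act s t = Delta (- (SOME g. act g s = t))"

end

theory Submission
  imports Defs
begin

(* Choose a set B0 whose orbit mass c(s) = lam {g. g s \<in> B0} (normalizer) is positive and
   finite at every point; properness and transitivity provide one. The modular relation gives
   c(g s) = Delta(g^-1) c(s), hence Delta~(s,t) = c(t)/c(s). Inserting
   1 = (1/c(s)) \<integral> 1_B0(g s) lam(dg), Fubini and the joint invariance of M disintegrate
     \<integral> F dM = \<integral> (\<integral> F(g^-1 s, g^-1 t) / c(g^-1 s) lam(dg)) 1_B0(s) M(d(s,t)).
   For both sides of the claim the inner integrals agree: the ratio c(g^-1 t)/c(g^-1 s) does
   not depend on g, and by left invariance of lam the orbit average
   \<integral> 1_B(g^-1 s)/c(g^-1 s) lam(dg) does not depend on s. *)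

lemma borel_measurable_uminus_group [measurable (raw)]:
  fixes f :: "'a \<Rightarrow> 'g::{topological_group_add, second_countable_topology}"
  assumes "f \<in> borel_measurable N"
  shows "(\<lambda>x. - f x) \<in> borel_measurable N"
proof -
  have "(uminus :: 'g \<Rightarrow> 'g) \<in> borel_measurable borel"
    by (intro borel_measurable_continuous_onI continuous_intros)
  from measurable_compose[OF assms this] show ?thesis by (simp add: o_def)
qed

locale group_action =
  fixes act :: "'g::{topological_group_add, second_countable_topology} \<Rightarrow> 's \<Rightarrow> 's"
    and S :: "'s measure"
  assumes action: "measurable_action act S"
begin

lemma act_zero: "s \<in> space S \<Longrightarrow> act 0 s = s"
  and act_add: "s \<in> space S \<Longrightarrow> act (g + h) s = act g (act h s)"
  using action unfolding measurable_action_def by auto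

lemma measurable_act [measurable (raw)]:
  assumes "f \<in> borel_measurable N" "h \<in> measurable N S"
  shows "(\<lambda>x. act (f x) (h x)) \<in> measurable N S"
proof -
  have "(\<lambda>(g, s). act g s) \<in> measurable (borel \<Otimes>\<^sub>M S) S"
    using action unfolding measurable_action_def by simp
  from measurable_compose[OF measurable_Pair[OF assms] this] show ?thesis by simp
qed

lemma act_in_space: "s \<in> space S \<Longrightarrow> act g s \<in> space S"
  using measurable_space[OF measurable_act, of "\<lambda>_. g" "count_space UNIV" "\<lambda>_. s"] by simp

lemma act_act_uminus: "s \<in> space S \<Longrightarrow> act g (act (- g) s) = s"
  using act_add[of s g "- g"] act_zero by simp

lemma transitive_action_connects:
  assumes "transitive_action act S" "s \<in> space S" "t \<in> space S"
  shows "\<exists>k. act k s = t"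
proof -
  obtain s0 where s0: "s0 \<in> space S" and orbit: "\<And>u. u \<in> space S \<Longrightarrow> \<exists>g. act g s0 = u"
    using assms(1) unfolding transitive_action_def by auto
  obtain a b where a: "act a s0 = s" and b: "act b s0 = t"
    using orbit assms(2,3) by blast
  have "act (b + - a) s = act b (act (- a + a) s0)"
    using act_add s0 assms(2) a by (simp only:)
  then have "act (b + - a) s = t"
    using act_zero s0 b by simp
  then show ?thesis ..
qed

lemma jointly_invariant_nn_integral:
  assumes "jointly_invariant act S M"
    and sets_M: "sets M = sets (S \<Otimes>\<^sub>M S)"
    and [measurable]: "F \<in> borel_measurable (S \<Otimes>\<^sub>M S)"
  shows "(\<integral>\<^sup>+ x. F (act g (fst x), act g (snd x)) \<partial>M) = (\<integral>\<^sup>+ x. F x \<partial>M)"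
proof -
  have space_M: "space M = space S \<times> space S"
    using sets_eq_imp_space_eq[OF sets_M] by (simp add: space_pair_measure)
  define T where "T x = (act g (fst x), act g (snd x))" for x
  have T: "T \<in> measurable M M"
    unfolding T_def measurable_cong_sets[OF sets_M sets_M] by measurable
  have "distr M M T = M"
  proof (rule measure_eqI)
    fix A assume "A \<in> sets (distr M M T)"
    then have A: "A \<in> sets M" by simp
    then have "A \<subseteq> space S \<times> space S"
      using sets.sets_into_space space_M by blast
    then have "T -` A \<inter> space M = (\<lambda>(s, t). (act (- g) s, act (- g) t)) ` A"
    proof (intro equalityI subsetI)
      fix x assume x: "x \<in> T -` A \<inter> space M"
      then have "x = (\<lambda>(s, t). (act (- g) s, act (- g) t)) (T x)"
        using act_act_uminus[of _ "- g"] by (auto simp: T_def space_M mem_Times_iff prod_eq_iff)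
      with x show "x \<in> (\<lambda>(s, t). (act (- g) s, act (- g) t)) ` A" by blast
    next
      fix x assume "x \<in> (\<lambda>(s, t). (act (- g) s, act (- g) t)) ` A"
      with \<open>A \<subseteq> space S \<times> space S\<close> show "x \<in> T -` A \<inter> space M"
        using act_act_uminus[of _ g] by (auto simp: T_def space_M act_in_space)
    qed
    then show "emeasure (distr M M T) A = emeasure M A"
      using emeasure_distr[OF T A] assms(1) A sets_M unfolding jointly_invariant_def by simp
  qed simp
  then have "(\<integral>\<^sup>+ x. F x \<partial>M) = (\<integral>\<^sup>+ x. F x \<partial>distr M M T)" by simp
  also have "\<dots> = (\<integral>\<^sup>+ x. F (T x) \<partial>M)"
    by (rule nn_integral_distr[OF T]) (simp add: measurable_cong_sets[OF sets_M refl])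
  finally show ?thesis by (simp add: T_def)
qed

lemma jointly_invariant_nn_integral_act_fst:
  assumes "jointly_invariant act S M" and sets_M: "sets M = sets (S \<Otimes>\<^sub>M S)"
    and [measurable]: "F \<in> borel_measurable (S \<Otimes>\<^sub>M S)" "G \<in> borel_measurable S"
  shows "(\<integral>\<^sup>+ x. F x * G (act g (fst x)) \<partial>M) =
    (\<integral>\<^sup>+ x. F (act (- g) (fst x), act (- g) (snd x)) * G (fst x) \<partial>M)"
proof -
  have space_M: "space M = space S \<times> space S"
    using sets_eq_imp_space_eq[OF sets_M] by (simp add: space_pair_measure)
  have "(\<lambda>y. F y * G (act g (fst y))) \<in> borel_measurable (S \<Otimes>\<^sub>M S)"
    by measurable
  from jointly_invariant_nn_integral[OF assms(1) sets_M this, of "- g"]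
  have "(\<integral>\<^sup>+ x. F x * G (act g (fst x)) \<partial>M) =
      (\<integral>\<^sup>+ x. F (act (- g) (fst x), act (- g) (snd x)) * G (act g (act (- g) (fst x))) \<partial>M)"
    by simp
  also have "\<dots> = (\<integral>\<^sup>+ x. F (act (- g) (fst x), act (- g) (snd x)) * G (fst x) \<partial>M)"
    by (intro nn_integral_cong) (auto simp: space_M mem_Times_iff act_act_uminus)
  finally show ?thesis .
qed

end

locale haar_action = group_action act S
  for act :: "'g::{topological_group_add, second_countable_topology} \<Rightarrow> 's \<Rightarrow> 's"
    and S :: "'s measure" +
  fixes lam :: "'g measure"
    and Delta :: "'g \<Rightarrow> real"
  assumes left_haar: "left_haar lam"
    and modular: "modular_function lam Delta"
begin

lemma sets_lam [measurable_cong]: "sets lam = sets borel"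
  using left_haar unfolding left_haar_def by simp

lemma space_lam [simp]: "space lam = UNIV"
  using sets_eq_imp_space_eq[OF sets_lam] by simp

lemma Delta_pos: "Delta h > 0"
  using modular unfolding modular_function_def by simp

lemma nn_integral_left_translate:
  assumes f: "f \<in> borel_measurable borel"
  shows "(\<integral>\<^sup>+ g. f (k + g) \<partial>lam) = (\<integral>\<^sup>+ g. f g \<partial>lam)"
proof -
  have T: "(+) k \<in> measurable lam borel"
    unfolding measurable_cong_sets[OF sets_lam refl]
    by (intro borel_measurable_continuous_onI continuous_intros)
  have "distr lam borel ((+) k) = lam"
  proof (rule measure_eqI)
    fix A assume "A \<in> sets (distr lam borel ((+) k))"
    then have A: "A \<in> sets borel" by simp
    have "(+) k -` A \<inter> space lam = (+) (- k) ` A"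
      by (auto simp: image_iff) (metis add_minus_cancel)
    then show "emeasure (distr lam borel ((+) k)) A = emeasure lam A"
      using emeasure_distr[OF T A] left_haar A unfolding left_haar_def by simp
  qed (simp add: sets_lam)
  then have "(\<integral>\<^sup>+ g. f g \<partial>lam) = (\<integral>\<^sup>+ g. f g \<partial>distr lam borel ((+) k))" by simp
  also have "\<dots> = (\<integral>\<^sup>+ g. f (k + g) \<partial>lam)"
    by (rule nn_integral_distr[OF T]) (simp add: f)
  finally show ?thesis ..
qed

lemma nn_integral_right_translate:
  "f \<in> borel_measurable borel \<Longrightarrow>
    (\<integral>\<^sup>+ g. f (g + h) \<partial>lam) = ennreal (Delta (- h)) * (\<integral>\<^sup>+ g. f g \<partial>lam)"
  using modular unfolding modular_function_def by blast

lemma nn_integral_act_uminus_act: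
  assumes [measurable]: "h \<in> borel_measurable S" and s: "s \<in> space S"
  shows "(\<integral>\<^sup>+ g. h (act (- g) (act k s)) \<partial>lam) = (\<integral>\<^sup>+ g. h (act (- g) s) \<partial>lam)"
proof -
  have "(\<lambda>g. h (act (- g) s)) \<in> borel_measurable borel"
    using s by measurable
  from nn_integral_left_translate[OF this, of "- k"] show ?thesis
    using s by (simp add: act_add[symmetric] minus_add add.assoc)
qed

definition orbit_mass :: "'s set \<Rightarrow> 's \<Rightarrow> ennreal" where
  "orbit_mass B s = (\<integral>\<^sup>+ g. indicator B (act g s) \<partial>lam)"

lemma orbit_mass_eq_orbit_measure:
  assumes "B \<in> sets S" "s \<in> space S"
  shows "orbit_mass B s = emeasure (orbit_measure lam act S s) B"
proof -
  have "(\<lambda>g. act g s) \<in> measurable lam S"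
    using assms by measurable
  from nn_integral_distr[OF this, of "indicator B"] show ?thesis
    using assms unfolding orbit_mass_def orbit_measure_def by simp
qed

lemma orbit_mass_act:
  assumes "B \<in> sets S" "s \<in> space S"
  shows "orbit_mass B (act x s) = ennreal (Delta (- x)) * orbit_mass B s"
proof -
  have "(\<lambda>g. indicator B (act g s) :: ennreal) \<in> borel_measurable borel"
    using assms by measurable
  from nn_integral_right_translate[OF this]
  have "(\<integral>\<^sup>+ g. indicator B (act (g + x) s) \<partial>lam) = ennreal (Delta (- x)) * orbit_mass B s"
    unfolding orbit_mass_def .
  then show ?thesis
    using assms(2) unfolding orbit_mass_def by (simp add: act_add)
qed

lemma sigma_finite_of_proper_action:
  assumes "proper_action lam act S" and s0: "s0 \<in> space S"
  shows "sigma_finite_measure lam"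
proof
  obtain B :: "nat \<Rightarrow> 's set" where B: "\<And>n. B n \<in> sets S" "(\<Union>n. B n) = space S"
    and finite: "\<And>n. emeasure (orbit_measure lam act S s0) (B n) < \<infinity>"
    using assms unfolding proper_action_def by blast
  have orbit: "(\<lambda>g. act g s0) \<in> measurable lam S"
    using s0 by measurable
  define A where "A n = (\<lambda>g. act g s0) -` B n" for n
  have "A n \<in> sets lam" for n
    using measurable_sets[OF orbit B(1)] by (simp add: A_def)
  moreover have "emeasure lam (A n) \<noteq> \<infinity>" for n
    using finite[of n] emeasure_distr[OF orbit B(1)]
    by (simp add: A_def orbit_measure_def)
  moreover have "(\<Union>n. A n) = UNIV"
  proof -
    have "act g s0 \<in> (\<Union>n. B n)" for g
      using B(2) act_in_space[OF s0] by simp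
    then show ?thesis by (auto simp: A_def)
  qed
  ultimately show "\<exists>A. countable A \<and> A \<subseteq> sets lam \<and> \<Union> A = space lam \<and> (\<forall>a\<in>A. emeasure lam a \<noteq> \<infinity>)"
    by (intro exI[of _ "range A"]) auto
qed

lemma obtain_normalizing_set:
  assumes "proper_action lam act S" "transitive_action act S"
  obtains B where "B \<in> sets S" "\<And>s. s \<in> space S \<Longrightarrow> 0 < orbit_mass B s \<and> orbit_mass B s < \<infinity>"
proof -
  obtain s0 where s0: "s0 \<in> space S"
    using assms(2) unfolding transitive_action_def by blast
  obtain B :: "nat \<Rightarrow> 's set" where B: "\<And>n. B n \<in> sets S" "(\<Union>n. B n) = space S"
    and finite: "\<And>n. orbit_mass (B n) s0 < \<infinity>"
    using assms(1) s0 orbit_mass_eq_orbit_measure unfolding proper_action_def by metis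
  have "0 < emeasure lam UNIV"
    using left_haar unfolding left_haar_def by simp
  also have "UNIV = (\<lambda>g. act g s0) -` space S"
    using act_in_space[OF s0] by auto
  also have "emeasure lam \<dots> = emeasure (orbit_measure lam act S s0) (\<Union>n. B n)"
    using s0 B(2) by (simp add: orbit_measure_def emeasure_distr)
  finally obtain n where pos: "0 < orbit_mass (B n) s0"
    using emeasure_UN_eq_0[of "orbit_measure lam act S s0" B] B(1) s0
    by (force simp: orbit_mass_eq_orbit_measure orbit_measure_def)
  show ?thesis
  proof (rule that[OF B(1)])
    fix s assume "s \<in> space S"
    then obtain k where k: "act k s0 = s"
      using transitive_action_connects[OF assms(2) s0] by blast
    have "orbit_mass (B n) s = ennreal (Delta (- k)) * orbit_mass (B n) s0"
      unfolding k[symmetric] by (rule orbit_mass_act[OF B(1) s0])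
    then show "0 < orbit_mass (B n) s \<and> orbit_mass (B n) s < \<infinity>"
      using pos finite[of n] Delta_pos[of "- k"] by (simp add: ennreal_mult_less_top ennreal_zero_less_mult_iff)
  qed
qed

end

locale normalized_haar_action = haar_action act S lam Delta + sigma_finite_measure lam
  for act :: "'g::{topological_group_add, second_countable_topology} \<Rightarrow> 's \<Rightarrow> 's"
    and S :: "'s measure" and lam :: "'g measure" and Delta :: "'g \<Rightarrow> real" +
  fixes B0 :: "'s set"
  assumes transitive: "transitive_action act S"
    and B0_sets [measurable]: "B0 \<in> sets S"
    and orbit_mass_B0: "s \<in> space S \<Longrightarrow> 0 < orbit_mass B0 s \<and> orbit_mass B0 s < \<infinity>"
begin

definition normalizer :: "'s \<Rightarrow> real" where
  "normalizer s = enn2real (orbit_mass B0 s)"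

lemma orbit_mass_B0_eq_normalizer: "s \<in> space S \<Longrightarrow> orbit_mass B0 s = ennreal (normalizer s)"
  using orbit_mass_B0 by (simp add: normalizer_def less_top)

lemma normalizer_pos: "s \<in> space S \<Longrightarrow> 0 < normalizer s"
  using orbit_mass_B0 by (simp add: normalizer_def enn2real_positive_iff)

lemma normalizer_act: "s \<in> space S \<Longrightarrow> normalizer (act x s) = Delta (- x) * normalizer s"
  using orbit_mass_act[OF B0_sets] Delta_pos[of "- x"]
  by (simp add: normalizer_def enn2real_mult)

lemma borel_measurable_orbit_mass [measurable]:
  assumes [measurable]: "B \<in> sets S"
  shows "orbit_mass B \<in> borel_measurable S"
proof -
  have "(\<lambda>(s, g). indicator B (act g s) :: ennreal) \<in> borel_measurable (S \<Otimes>\<^sub>M lam)"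
    by measurable
  from borel_measurable_nn_integral[OF this] show ?thesis
    unfolding orbit_mass_def[abs_def] by simp
qed

lemma borel_measurable_normalizer [measurable]: "normalizer \<in> borel_measurable S"
  unfolding normalizer_def[abs_def] by measurable

lemma Delta_tilde_eq_normalizer_ratio:
  assumes s: "s \<in> space S" and t: "t \<in> space S"
  shows "Delta_tilde Delta act s t = normalizer t / normalizer s"
proof -
  define k where "k = (SOME g. act g s = t)"
  have "act k s = t"
    unfolding k_def using transitive_action_connects[OF transitive s t] by (rule someI_ex)
  then have "normalizer t = Delta (- k) * normalizer s"
    using normalizer_act[OF s] by blast
  then show ?thesis
    using normalizer_pos[OF s] unfolding Delta_tilde_def k_def[symmetric] by simp
qed

lemma nn_integral_jointly_invariant_disintegration:
  assumes sets_M [measurable_cong]: "sets M = sets (S \<Otimes>\<^sub>M S)"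
    and "sigma_finite_measure M" "jointly_invariant act S M"
    and [measurable]: "F \<in> borel_measurable (S \<Otimes>\<^sub>M S)"
  shows "(\<integral>\<^sup>+ x. F x \<partial>M) =
    (\<integral>\<^sup>+ x. (\<integral>\<^sup>+ g. F (act (- g) (fst x), act (- g) (snd x)) *
        ennreal (inverse (normalizer (act (- g) (fst x)))) \<partial>lam) * indicator B0 (fst x) \<partial>M)"
proof -
  interpret M: sigma_finite_measure M by fact
  interpret pair_sigma_finite lam M ..
  have space_M: "space M = space S \<times> space S"
    using sets_eq_imp_space_eq[OF sets_M] by (simp add: space_pair_measure)
  define w where "w x = F x * ennreal (inverse (normalizer (fst x)))" for x
  have [measurable]: "w \<in> borel_measurable (S \<Otimes>\<^sub>M S)"
    unfolding w_def[abs_def] by measurable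
  have "(\<integral>\<^sup>+ x. F x \<partial>M) = (\<integral>\<^sup>+ x. w x * orbit_mass B0 (fst x) \<partial>M)"
  proof (rule nn_integral_cong)
    fix x assume "x \<in> space M"
    then have "0 < normalizer (fst x)" "orbit_mass B0 (fst x) = ennreal (normalizer (fst x))"
      using normalizer_pos orbit_mass_B0_eq_normalizer by (auto simp: space_M mem_Times_iff)
    then show "F x = w x * orbit_mass B0 (fst x)"
      by (simp add: w_def mult.assoc ennreal_mult[symmetric])
  qed
  also have "\<dots> = (\<integral>\<^sup>+ x. \<integral>\<^sup>+ g. w x * indicator B0 (act g (fst x)) \<partial>lam \<partial>M)"
    unfolding orbit_mass_def
    by (intro nn_integral_cong nn_integral_cmult[symmetric]) (auto simp: space_M mem_Times_iff)
  also have "\<dots> = (\<integral>\<^sup>+ g. \<integral>\<^sup>+ x. w x * indicator B0 (act g (fst x)) \<partial>M \<partial>lam)"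
    by (rule Fubini') measurable
  also have "\<dots> = (\<integral>\<^sup>+ g. \<integral>\<^sup>+ x. w (act (- g) (fst x), act (- g) (snd x)) * indicator B0 (fst x) \<partial>M \<partial>lam)"
    by (intro nn_integral_cong jointly_invariant_nn_integral_act_fst[OF assms(3) sets_M]) measurable
  also have "\<dots> = (\<integral>\<^sup>+ x. \<integral>\<^sup>+ g. w (act (- g) (fst x), act (- g) (snd x)) * indicator B0 (fst x) \<partial>lam \<partial>M)"
    by (rule Fubini'[symmetric]) measurable
  also have "\<dots> = (\<integral>\<^sup>+ x. (\<integral>\<^sup>+ g. w (act (- g) (fst x), act (- g) (snd x)) \<partial>lam) * indicator B0 (fst x) \<partial>M)"
    by (intro nn_integral_cong nn_integral_multc) (auto simp: space_M mem_Times_iff)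
  finally show ?thesis
    by (simp add: w_def)
qed

lemma orbit_average_normalizer_ratio:
  assumes [measurable]: "B \<in> sets S" and s: "s \<in> space S" and t: "t \<in> space S"
  shows "(\<integral>\<^sup>+ g. ennreal (normalizer (act (- g) t) / normalizer (act (- g) s)) *
        indicator B (act (- g) s) * ennreal (inverse (normalizer (act (- g) s))) \<partial>lam) =
    (\<integral>\<^sup>+ g. indicator B (act (- g) t) * ennreal (inverse (normalizer (act (- g) s))) \<partial>lam)"
proof -
  define h where "h u = indicator B u * ennreal (inverse (normalizer u))" for u
  have h [measurable]: "h \<in> borel_measurable S"
    unfolding h_def[abs_def] by measurable
  define r where "r = normalizer t / normalizer s"
  have N: "normalizer (act (- g) u) = Delta g * normalizer u" if "u \<in> space S" for g u
    using normalizer_act[OF that, of "- g"] by simp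
  have Npos: "0 < normalizer s" "0 < normalizer t" "0 < Delta g" for g
    using normalizer_pos s t Delta_pos by auto
  obtain k where k: "act k s = t"
    using transitive_action_connects[OF transitive s t] by blast
  have "(\<integral>\<^sup>+ g. ennreal (normalizer (act (- g) t) / normalizer (act (- g) s)) *
        indicator B (act (- g) s) * ennreal (inverse (normalizer (act (- g) s))) \<partial>lam) =
      (\<integral>\<^sup>+ g. ennreal r * h (act (- g) s) \<partial>lam)"
    using Npos by (intro nn_integral_cong) (simp add: N s t r_def h_def mult.assoc)
  also have "\<dots> = ennreal r * (\<integral>\<^sup>+ g. h (act (- g) s) \<partial>lam)"
    using s by (intro nn_integral_cmult) measurable
  also have "\<dots> = ennreal r * (\<integral>\<^sup>+ g. h (act (- g) t) \<partial>lam)"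
    using nn_integral_act_uminus_act[OF h s, of k] k by simp
  also have "\<dots> = (\<integral>\<^sup>+ g. ennreal r * h (act (- g) t) \<partial>lam)"
    using t by (intro nn_integral_cmult[symmetric]) measurable
  also have "\<dots> = (\<integral>\<^sup>+ g. indicator B (act (- g) t) * ennreal (inverse (normalizer (act (- g) s))) \<partial>lam)"
  proof (intro nn_integral_cong)
    fix g
    have "r * inverse (normalizer (act (- g) t)) = inverse (normalizer (act (- g) s))"
      using Npos by (simp add: N s t r_def field_simps)
    moreover have "0 \<le> r"
      using Npos by (simp add: r_def)
    ultimately show "ennreal r * h (act (- g) t) = indicator B (act (- g) t) * ennreal (inverse (normalizer (act (- g) s)))"
      unfolding h_def by (metis ennreal_mult' mult.left_commute)
  qed
  finally show ?thesis .
qed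

lemma nn_integral_Delta_tilde_indicator:
  assumes sets_M: "sets M = sets (S \<Otimes>\<^sub>M S)"
    and "sigma_finite_measure M" "jointly_invariant act S M"
    and [measurable]: "B \<in> sets S"
  shows "(\<integral>\<^sup>+ x. ennreal (Delta_tilde Delta act (fst x) (snd x)) * indicator B (fst x) \<partial>M) =
    (\<integral>\<^sup>+ x. indicator B (snd x) \<partial>M)"
proof -
  have space_M: "space M = space S \<times> space S"
    using sets_eq_imp_space_eq[OF sets_M] by (simp add: space_pair_measure)
  note disintegration = nn_integral_jointly_invariant_disintegration[OF assms(1-3)]
  have ratio_measurable: "(\<lambda>x. ennreal (normalizer (snd x) / normalizer (fst x)) * indicator B (fst x))
      \<in> borel_measurable (S \<Otimes>\<^sub>M S)"
    by measurable
  have "(\<integral>\<^sup>+ x. ennreal (Delta_tilde Delta act (fst x) (snd x)) * indicator B (fst x) \<partial>M) =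
      (\<integral>\<^sup>+ x. ennreal (normalizer (snd x) / normalizer (fst x)) * indicator B (fst x) \<partial>M)"
    by (intro nn_integral_cong) (auto simp: space_M mem_Times_iff Delta_tilde_eq_normalizer_ratio)
  also have "\<dots> = (\<integral>\<^sup>+ x. (\<integral>\<^sup>+ g. ennreal (normalizer (act (- g) (snd x)) / normalizer (act (- g) (fst x))) *
        indicator B (act (- g) (fst x)) * ennreal (inverse (normalizer (act (- g) (fst x)))) \<partial>lam) *
      indicator B0 (fst x) \<partial>M)"
    by (simp add: disintegration[OF ratio_measurable])
  also have "\<dots> = (\<integral>\<^sup>+ x. (\<integral>\<^sup>+ g. indicator B (act (- g) (snd x)) *
        ennreal (inverse (normalizer (act (- g) (fst x)))) \<partial>lam) * indicator B0 (fst x) \<partial>M)"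
    by (intro nn_integral_cong) (auto simp: space_M mem_Times_iff orbit_average_normalizer_ratio)
  also have "\<dots> = (\<integral>\<^sup>+ x. indicator B (snd x) \<partial>M)"
    by (simp add: disintegration[of "\<lambda>x. indicator B (snd x)"])
  finally show ?thesis .
qed

end

theorem corollary6p2:
  fixes lam :: "'g::{topological_group_add, second_countable_topology, t2_space} measure"
    and Delta :: "'g \<Rightarrow> real"
    and S :: "'s measure"
    and act :: "'g \<Rightarrow> 's \<Rightarrow> 's"
    and M :: "('s \<times> 's) measure"
    and B :: "'s set"
  assumes "locally_compact_space (euclidean :: 'g topology)"
    and "left_haar lam"
    and "modular_function lam Delta"
    and "borel_space_meas S"
    and "measurable_action act S"
    and "proper_action lam act S"
    and "transitive_action act S"
    and "sets M = sets (S \<Otimes>\<^sub>M S)"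
    and "sigma_finite_measure M"
    and "jointly_invariant act S M"
    and "B \<in> sets S"
  shows "(\<integral>\<^sup>+ st. ennreal (Delta_tilde Delta act (fst st) (snd st)) * indicator B (fst st) \<partial>M)
       = (\<integral>\<^sup>+ st. indicator B (snd st) \<partial>M)"
proof -
  interpret haar_action act S lam Delta
    using assms(2,3,5) by unfold_locales
  obtain s0 where "s0 \<in> space S"
    using assms(7) unfolding transitive_action_def by blast
  interpret sigma_finite_measure lam
    using sigma_finite_of_proper_action[OF assms(6) \<open>s0 \<in> space S\<close>] .
  obtain B0 where "B0 \<in> sets S" "\<And>s. s \<in> space S \<Longrightarrow> 0 < orbit_mass B0 s \<and> orbit_mass B0 s < \<infinity>"
    using obtain_normalizing_set[OF assms(6,7)] by blast
  interpret normalized_haar_action act S lam Delta B0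
    by unfold_locales fact+
  show ?thesis
    using nn_integral_Delta_tilde_indicator[OF assms(8-11)] .
qed

end
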